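(* Let $T_0\in\mathcal{G}(X)$ and $T \in \mathcal{G}_{T_0}$. Let $D \subset L^2(Z|X)$ be a set with $\big\|\|f\|_{L^2(Z|X)}\big\|_{L^\infty(X)} \le 1$ for all $f\in D$, such that $D$ is dense, with respect to the $L^2(Z)$ norm, in the unit ball $\{f\in L^2(Z|X) : \|\|f\|_{L^2(Z|X)}\|_{L^\infty(X)}\le 1\}$. Suppose there is a subsequence $n_k$ such that for all $f_i, f_j \in D$, $$\lim_{k\to\infty}\big\|\mathbb{E}(T^{n_k}f_i\cdot\overline{f_j}|X) - \mathbb{E}(T_0^{n_k}f_i\cdot\overline{f_j}|X)\big\|_{L^2(X)} = 0.$$ Then $T \in \mathcal{R}_{T_0}$.
   Context: Let $(X,m)$ and $(Y,\nu)$ both be the unit interval with Lebesgue measure, and $(Z,\mu) = (X\times Y, m\times\nu)$. $\mathcal{G}(W)$ denotes the set of invertible measure-preserving transformations of a space $W$. $\mathcal{G}_{T_0} \subset \mathcal{G}(Z)$ is the set of transformations of the form $T(x,y) = (T_0x, T_x y)$ with $T_x \in \mathcal{G}(Y)$ (extensions of $T_0$); $T_0$ is identified with $T_0\times\mathrm{id}_Y$ on $Z$. For $f$ on $Z$, $T^nf = f\circ T^n$. $\mathbb{E}(\cdot|X)$ is conditional expectation onto the $\sigma$-algebra of sets $B\times Y$. $L^2(Z|X)$ is the space of $f\in L^2(Z)$ with $\|f\|_{L^2(Z|X)} := \mathbb{E}(|f|^2|X)^{1/2} \in L^\infty(X)$. $T\in\mathcal{G}_{T_0}$ is a rigid extension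 of $T_0$ if there is a subsequence $n_k$ such that for all $f,g\in L^2(Z|X)$, $\lim_{k\to\infty}\|\mathbb{E}(T^{n_k}f\cdot\overline{g}|X) - \mathbb{E}(T_0^{n_k}f\cdot\overline{g}|X)\|_{L^2(X)} = 0$; $\mathcal{R}_{T_0}$ is the set of rigid extensions. *)

theory Defs
  imports "HOL-Probability.Probability"
begin

text \<open>The unit interval with Lebesgue measure, and the product space Z = X x Y.\<close>
definition MX :: "real measure" where
  "MX = restrict_space lborel {0..1}"

definition MZ :: "(real \<times> real) measure" where
  "MZ = MX \<Otimes>\<^sub>M MX"

text \<open>The sub-sigma-algebra of Z consisting of the sets B x Y.\<close>
definition Xalg :: "(real \<times> real) measure" where
  "Xalg = vimage_algebra (space MZ) fst MX"

definition G :: "'a measure \<Rightarrow> ('a \<Rightarrow> 'a) set" where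
  "G W = {T. bij_betw T (space W) (space W) \<and> T \<in> measurable W W
             \<and> the_inv_into (space W) T \<in> measurable W W \<and> distr W W T = W}"

definition G_ext :: "(real \<Rightarrow> real) \<Rightarrow> (real \<times> real \<Rightarrow> real \<times> real) set" where
  "G_ext T0 = {T. T \<in> G MZ \<and> (\<exists>Tx :: real \<Rightarrow> real \<Rightarrow> real.
        \<forall>x \<in> space MX. Tx x \<in> G MX \<and> (\<forall>y \<in> space MX. T (x, y) = (T0 x, Tx x y)))}"

text \<open>T0 identified with T0 x id on Z.\<close>
definition liftX :: "(real \<Rightarrow> real) \<Rightarrow> real \<times> real \<Rightarrow> real \<times> real" where
  "liftX T0 = (\<lambda>(x, y). (T0 x, y))"

definition condexpX :: "(real \<times> real \<Rightarrow> complex) \<Rightarrow> real \<times> real \<Rightarrow> complex" where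
  "condexpX g = (\<lambda>z. complex_of_real (real_cond_exp MZ Xalg (\<lambda>w. Re (g w)) z)
                    + \<i> * complex_of_real (real_cond_exp MZ Xalg (\<lambda>w. Im (g w)) z))"

definition condnorm2 :: "(real \<times> real \<Rightarrow> complex) \<Rightarrow> real \<times> real \<Rightarrow> ennreal" where
  "condnorm2 f = nn_cond_exp MZ Xalg (\<lambda>z. ennreal ((cmod (f z))\<^sup>2))"

definition L2ZX :: "(real \<times> real \<Rightarrow> complex) set" where
  "L2ZX = {f. f \<in> borel_measurable MZ \<and> esssup MZ (condnorm2 f) < \<infinity>}"

text \<open>Unit ball of L^2(Z|X): || ||f||_{L^2(Z|X)} ||_{L^infty} \<le> 1 (equivalently, for squares).\<close>
definition unit_ballZX :: "(real \<times> real \<Rightarrow> complex) set" where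
  "unit_ballZX = {f \<in> L2ZX. esssup MZ (condnorm2 f) \<le> 1}"

text \<open>L^2(Z) norm. For X-measurable functions it equals the L^2(X) norm (nu(Y) = 1).\<close>
definition L2norm :: "(real \<times> real \<Rightarrow> complex) \<Rightarrow> real" where
  "L2norm h = sqrt (\<integral>z. (cmod (h z))\<^sup>2 \<partial>MZ)"

definition R_ext :: "(real \<Rightarrow> real) \<Rightarrow> (real \<times> real \<Rightarrow> real \<times> real) set" where
  "R_ext T0 = {T \<in> G_ext T0. \<exists>n :: nat \<Rightarrow> nat. strict_mono n \<and>
      (\<forall>f \<in> L2ZX. \<forall>g \<in> L2ZX.
         (\<lambda>k. L2norm (\<lambda>z. condexpX (\<lambda>w. f ((T ^^ n k) w) * cnj (g w)) z
                         - condexpX (\<lambda>w. f ((liftX T0 ^^ n k) w) * cnj (g w)) z))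
         \<longlonglongrightarrow> 0)}"

end

theory Submission
  imports Defs
begin

text \<open>Write \<open>ccorr U m f g = E(f\<circ>U\<^sup>m \<cdot> cnj g | X)\<close>. Because both \<open>T\<close> and \<open>T0 \<times> id\<close> preserve the
  measure and the fibration over \<open>X\<close>, conditional expectation onto \<open>X\<close> commutes with them, so
  \<open>f\<circ>U\<^sup>m\<close> keeps the conditional bound of \<open>f\<close> and its \<open>L\<^sup>2\<close> norm. If \<open>f', g' \<in> D\<close> are
  \<open>\<eta>\<close>-close to \<open>f, g\<close> in the unit ball, then \<open>ccorr U m f g - ccorr U m f' g'\<close> has squared
  \<open>L\<^sup>2\<close> norm \<open>O(\<eta>)\<close>, uniformly in \<open>m\<close> and for both maps, by \<open>\<parallel>h\<parallel>\<^sub>2\<^sup>2 \<le> \<parallel>h\<parallel>\<^sub>\<infinity> \<parallel>h\<parallel>\<^sub>1\<close>.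
  Hence the gap between the correlations of \<open>T\<close> and \<open>T0\<close> for \<open>f, g\<close> is eventually within
  \<open>O(\<eta>)\<close> of the gap for \<open>f', g'\<close>, which tends to \<open>0\<close> along \<open>n k\<close>. Arbitrary \<open>f, g\<close> in
  \<open>L\<^sup>2(Z|X)\<close> are reduced to the unit ball by sesquilinearity.\<close>

lemma space_MX: "space MX = {0..1}"
  by (simp add: MX_def space_restrict_space)

lemma prob_space_MX: "prob_space MX"
  unfolding MX_def by (rule prob_space_restrict_space) auto

lemma prob_space_MZ: "prob_space MZ"
  unfolding MZ_def using prob_space_MX by (simp add: prob_space_pair)

lemma space_MZ: "space MZ = {0..1} \<times> {0..1}"
  by (simp add: MZ_def space_pair_measure space_MX)

lemma measurable_fst_MZ: "fst \<in> measurable MZ MX"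
  unfolding MZ_def by simp

lemma sets_Xalg: "sets Xalg = {fst -` A \<inter> space MZ | A. A \<in> sets MX}"
  unfolding Xalg_def using measurable_space[OF measurable_fst_MZ]
  by (intro sets_vimage_algebra2) auto

lemma subalgebra_Xalg: "subalgebra MZ Xalg"
  unfolding subalgebra_def sets_Xalg using measurable_fst_MZ
  by (auto simp: Xalg_def measurable_def)

interpretation Z: sigma_finite_subalgebra MZ Xalg
proof -
  interpret prob_space MZ by (rule prob_space_MZ)
  interpret finite_measure_subalgebra MZ Xalg
    by unfold_locales (rule subalgebra_Xalg)
  show "sigma_finite_subalgebra MZ Xalg" by unfold_locales
qed

lemma cmod_add_sq_le: "(cmod (a + b))\<^sup>2 \<le> 2 * (cmod a)\<^sup>2 + 2 * (cmod b)\<^sup>2"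
proof -
  have "(cmod (a + b))\<^sup>2 \<le> (cmod a + cmod b)\<^sup>2"
    by (intro power_mono norm_triangle_ineq) auto
  also have "\<dots> \<le> 2 * (cmod a)\<^sup>2 + 2 * (cmod b)\<^sup>2"
    using sum_squares_bound[of "cmod a" "cmod b"] by (simp add: power2_sum)
  finally show ?thesis .
qed

lemma cmod_diff_sq_le: "(cmod (a - b))\<^sup>2 \<le> 2 * (cmod a)\<^sup>2 + 2 * (cmod b)\<^sup>2"
  using cmod_add_sq_le[of a "- b"] by simp

lemma cmod_mult_cnj_le:
  assumes "d > 0"
  shows "cmod (a * cnj b) \<le> (cmod a)\<^sup>2 / d + d * (cmod b)\<^sup>2"
proof -
  have "0 \<le> (cmod a - d * cmod b)\<^sup>2" by simp
  then have "2 * (d * (cmod a * cmod b)) \<le> (cmod a)\<^sup>2 + d\<^sup>2 * (cmod b)\<^sup>2"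
    by (simp add: power2_diff power_mult_distrib algebra_simps)
  then have "d * (cmod a * cmod b) \<le> (cmod a)\<^sup>2 + d\<^sup>2 * (cmod b)\<^sup>2"
    using assms by (smt (verit) mult_nonneg_nonneg norm_ge_zero)
  then show ?thesis
    using assms by (simp add: norm_mult field_simps power2_eq_square)
qed

context sigma_finite_subalgebra
begin

lemma nn_cond_exp_lin_comb:
  fixes \<alpha> \<beta> :: ennreal
  assumes [measurable]: "g \<in> borel_measurable M" "h \<in> borel_measurable M"
  shows "AE x in M. nn_cond_exp M F (\<lambda>x. \<alpha> * g x + \<beta> * h x) x
            = \<alpha> * nn_cond_exp M F g x + \<beta> * nn_cond_exp M F h x"
proof -
  have "AE x in M. nn_cond_exp M F (\<lambda>x. \<alpha> * g x) x + nn_cond_exp M F (\<lambda>x. \<beta> * h x) x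
      = nn_cond_exp M F (\<lambda>x. \<alpha> * g x + \<beta> * h x) x"
    by (rule nn_cond_exp_sum) auto
  moreover have "AE x in M. \<alpha> * nn_cond_exp M F g x = nn_cond_exp M F (\<lambda>x. \<alpha> * g x) x"
    by (rule nn_cond_exp_prod[where f="\<lambda>_. \<alpha>"]) auto
  moreover have "AE x in M. \<beta> * nn_cond_exp M F h x = nn_cond_exp M F (\<lambda>x. \<beta> * h x) x"
    by (rule nn_cond_exp_prod[where f="\<lambda>_. \<beta>"]) auto
  ultimately show ?thesis by eventually_elim simp
qed

end

definition cond_sq_bounded :: "(real \<times> real \<Rightarrow> complex) \<Rightarrow> real \<Rightarrow> bool" where
  "cond_sq_bounded a C \<longleftrightarrow> a \<in> borel_measurable MZ \<and> C \<ge> 0 \<and>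
     (AE z in MZ. nn_cond_exp MZ Xalg (\<lambda>z. ennreal ((cmod (a z))\<^sup>2)) z \<le> ennreal C)"

lemma cond_sq_bounded_measurable [measurable_dest]:
  "cond_sq_bounded a C \<Longrightarrow> a \<in> borel_measurable MZ"
  by (simp add: cond_sq_bounded_def)

lemma cond_sq_bounded_nonneg: "cond_sq_bounded a C \<Longrightarrow> C \<ge> 0"
  by (simp add: cond_sq_bounded_def)

lemma cond_sq_bounded_mono: "cond_sq_bounded a C \<Longrightarrow> C \<le> C' \<Longrightarrow> cond_sq_bounded a C'"
  unfolding cond_sq_bounded_def by (auto elim!: eventually_mono intro: order_trans ennreal_leI)

lemma cond_sq_bounded_lin_comb:
  assumes a: "cond_sq_bounded a A" and b: "cond_sq_bounded b B"
    and [measurable]: "c \<in> borel_measurable MZ" and "\<alpha> \<ge> 0" "\<beta> \<ge> 0"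
    and le: "\<And>z. (cmod (c z))\<^sup>2 \<le> \<alpha> * (cmod (a z))\<^sup>2 + \<beta> * (cmod (b z))\<^sup>2"
  shows "cond_sq_bounded c (\<alpha> * A + \<beta> * B)"
proof -
  note [measurable] = cond_sq_bounded_measurable[OF a] cond_sq_bounded_measurable[OF b]
  let ?E = "\<lambda>a. nn_cond_exp MZ Xalg (\<lambda>z. ennreal ((cmod (a z))\<^sup>2))"
  have "AE z in MZ. ?E c z \<le>
      nn_cond_exp MZ Xalg (\<lambda>z. ennreal \<alpha> * ennreal ((cmod (a z))\<^sup>2) + ennreal \<beta> * ennreal ((cmod (b z))\<^sup>2)) z"
    using le \<open>\<alpha> \<ge> 0\<close> \<open>\<beta> \<ge> 0\<close>
    by (intro Z.nn_cond_exp_mono AE_I2) (auto simp flip: ennreal_mult ennreal_plus intro!: ennreal_leI)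
  moreover have "AE z in MZ. nn_cond_exp MZ Xalg (\<lambda>z. ennreal \<alpha> * ennreal ((cmod (a z))\<^sup>2) + ennreal \<beta> * ennreal ((cmod (b z))\<^sup>2)) z
     = ennreal \<alpha> * ?E a z + ennreal \<beta> * ?E b z"
    by (rule Z.nn_cond_exp_lin_comb) auto
  moreover have "AE z in MZ. ?E a z \<le> ennreal A" "AE z in MZ. ?E b z \<le> ennreal B"
    using a b by (auto simp: cond_sq_bounded_def)
  ultimately have "AE z in MZ. ?E c z \<le> ennreal \<alpha> * ennreal A + ennreal \<beta> * ennreal B"
  proof eventually_elim
    case (elim z)
    then have "?E c z \<le> ennreal \<alpha> * ?E a z + ennreal \<beta> * ?E b z" by simp
    also have "\<dots> \<le> ennreal \<alpha> * ennreal A + ennreal \<beta> * ennreal B"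
      using elim(3,4) by (intro add_mono mult_left_mono) auto
    finally show ?case .
  qed
  then show ?thesis
    using a b \<open>\<alpha> \<ge> 0\<close> \<open>\<beta> \<ge> 0\<close>
    by (auto simp: cond_sq_bounded_def ennreal_mult ennreal_plus)
qed

lemma cond_sq_bounded_diff:
  assumes "cond_sq_bounded a A" "cond_sq_bounded b B"
  shows "cond_sq_bounded (\<lambda>z. a z - b z) (2 * A + 2 * B)"
  by (rule cond_sq_bounded_lin_comb[OF assms]) (use assms cmod_diff_sq_le in auto)

lemma cond_sq_bounded_scaleR:
  assumes "cond_sq_bounded a A"
  shows "cond_sq_bounded (\<lambda>z. complex_of_real c * a z) (c\<^sup>2 * A)"
proof -
  have "cond_sq_bounded (\<lambda>z. complex_of_real c * a z) (c\<^sup>2 * A + 0 * A)"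
    by (rule cond_sq_bounded_lin_comb[OF assms assms])
      (use assms in \<open>auto simp: norm_mult power_mult_distrib\<close>)
  then show ?thesis by simp
qed

definition sq_L2 :: "(real \<times> real \<Rightarrow> complex) \<Rightarrow> ennreal" where
  "sq_L2 u = (\<integral>\<^sup>+ z. ennreal ((cmod (u z))\<^sup>2) \<partial>MZ)"

lemma sq_L2_cong_AE: "AE z in MZ. u z = v z \<Longrightarrow> sq_L2 u = sq_L2 v"
  unfolding sq_L2_def by (rule nn_integral_cong_AE) (auto elim: eventually_mono)

lemma sq_L2_le_lin_comb:
  assumes [measurable]: "u \<in> borel_measurable MZ" "v \<in> borel_measurable MZ"
    and "\<alpha> \<ge> 0" "\<beta> \<ge> 0"
    and le: "\<And>z. (cmod (w z))\<^sup>2 \<le> \<alpha> * (cmod (u z))\<^sup>2 + \<beta> * (cmod (v z))\<^sup>2"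
  shows "sq_L2 w \<le> ennreal \<alpha> * sq_L2 u + ennreal \<beta> * sq_L2 v"
proof -
  have "sq_L2 w \<le> (\<integral>\<^sup>+ z. ennreal \<alpha> * ennreal ((cmod (u z))\<^sup>2) + ennreal \<beta> * ennreal ((cmod (v z))\<^sup>2) \<partial>MZ)"
    unfolding sq_L2_def using le \<open>\<alpha> \<ge> 0\<close> \<open>\<beta> \<ge> 0\<close>
    by (intro nn_integral_mono) (auto simp flip: ennreal_mult ennreal_plus intro!: ennreal_leI)
  also have "\<dots> = ennreal \<alpha> * sq_L2 u + ennreal \<beta> * sq_L2 v"
    unfolding sq_L2_def by (subst nn_integral_add) (auto simp: nn_integral_cmult)
  finally show ?thesis .
qed

lemma sq_L2_add_le:
  "u \<in> borel_measurable MZ \<Longrightarrow> v \<in> borel_measurable MZ \<Longrightarrow>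
    sq_L2 (\<lambda>z. u z + v z) \<le> 2 * sq_L2 u + 2 * sq_L2 v"
  using sq_L2_le_lin_comb[of u v 2 2] cmod_add_sq_le by simp

lemma sq_L2_diff_le:
  "u \<in> borel_measurable MZ \<Longrightarrow> v \<in> borel_measurable MZ \<Longrightarrow>
    sq_L2 (\<lambda>z. u z - v z) \<le> 2 * sq_L2 u + 2 * sq_L2 v"
  using sq_L2_le_lin_comb[of u v 2 2] cmod_diff_sq_le by simp

lemma sq_L2_scaleR:
  assumes "u \<in> borel_measurable MZ"
  shows "sq_L2 (\<lambda>z. complex_of_real c * u z) = ennreal (c\<^sup>2) * sq_L2 u"
  unfolding sq_L2_def using assms
  by (subst nn_integral_cmult[symmetric])
    (auto simp: norm_mult power_mult_distrib ennreal_mult intro!: nn_integral_cong)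

lemma sq_L2_le_of_cond_sq_bounded:
  assumes "cond_sq_bounded a C"
  shows "sq_L2 a \<le> ennreal C"
proof -
  note [measurable] = cond_sq_bounded_measurable[OF assms]
  have "sq_L2 a = (\<integral>\<^sup>+ z. 1 * nn_cond_exp MZ Xalg (\<lambda>z. ennreal ((cmod (a z))\<^sup>2)) z \<partial>MZ)"
    unfolding sq_L2_def using Z.nn_cond_exp_intg[of "\<lambda>_. 1" "\<lambda>z. ennreal ((cmod (a z))\<^sup>2)"] by simp
  also have "\<dots> \<le> (\<integral>\<^sup>+ z. ennreal C \<partial>MZ)"
    using assms unfolding cond_sq_bounded_def by (intro nn_integral_mono_AE) auto
  also have "\<dots> = ennreal C"
    using prob_space.emeasure_space_1[OF prob_space_MZ] by simp
  finally show ?thesis .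
qed

lemma L2norm_eq_sqrt_sq_L2:
  "u \<in> borel_measurable MZ \<Longrightarrow> L2norm u = sqrt (enn2real (sq_L2 u))"
  unfolding L2norm_def sq_L2_def by (subst integral_eq_nn_integral) auto

lemma sq_L2_less_of_L2norm_less:
  assumes "u \<in> borel_measurable MZ" "sq_L2 u < \<infinity>" "L2norm u < r"
  shows "sq_L2 u < ennreal (r\<^sup>2)"
proof -
  obtain p where p: "sq_L2 u = ennreal p" "p \<ge> 0" using assms(2) by (cases "sq_L2 u") auto
  then have "sqrt p < r" using assms by (simp add: L2norm_eq_sqrt_sq_L2)
  then have "p < r\<^sup>2" using p(2) real_sqrt_less_iff by fastforce
  then show ?thesis using p by (auto intro!: ennreal_lessI)
qed

lemma L2norm_tendsto_zero_iff:
  assumes "\<And>k. u k \<in> borel_measurable MZ" "\<And>k. sq_L2 (u k) < \<infinity>"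
  shows "(\<lambda>k. L2norm (u k)) \<longlonglongrightarrow> 0 \<longleftrightarrow> (\<lambda>k. sq_L2 (u k)) \<longlonglongrightarrow> 0"
proof -
  have sq: "sq_L2 (u k) = ennreal ((L2norm (u k))\<^sup>2)" for k
    using assms[of k] by (simp add: L2norm_eq_sqrt_sq_L2 less_top)
  have nonneg: "L2norm (u k) \<ge> 0" for k
    unfolding L2norm_def by simp
  have "(\<lambda>k. L2norm (u k)) \<longlonglongrightarrow> 0 \<longleftrightarrow> (\<lambda>k. (L2norm (u k))\<^sup>2) \<longlonglongrightarrow> 0"
  proof
    assume "(\<lambda>k. L2norm (u k)) \<longlonglongrightarrow> 0"
    from tendsto_power[OF this, of 2] show "(\<lambda>k. (L2norm (u k))\<^sup>2) \<longlonglongrightarrow> 0" by simp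
  next
    assume "(\<lambda>k. (L2norm (u k))\<^sup>2) \<longlonglongrightarrow> 0"
    from tendsto_real_sqrt[OF this] show "(\<lambda>k. L2norm (u k)) \<longlonglongrightarrow> 0"
      using nonneg by simp
  qed
  also have "\<dots> \<longleftrightarrow> (\<lambda>k. ennreal ((L2norm (u k))\<^sup>2)) \<longlonglongrightarrow> ennreal 0"
    by (rule tendsto_ennreal_iff[symmetric]) auto
  finally show ?thesis by (simp add: sq)
qed

lemma unit_ballZX_iff: "f \<in> unit_ballZX \<longleftrightarrow> cond_sq_bounded f 1"
proof
  assume f: "f \<in> unit_ballZX"
  have "AE z in MZ. condnorm2 f z \<le> esssup MZ (condnorm2 f)" by (rule esssup_AE)
  then have "AE z in MZ. condnorm2 f z \<le> 1"
    using f unfolding unit_ballZX_def by (auto elim: eventually_mono intro: order_trans)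
  then show "cond_sq_bounded f 1"
    using f unfolding cond_sq_bounded_def condnorm2_def unit_ballZX_def L2ZX_def by auto
next
  assume f: "cond_sq_bounded f 1"
  then have "esssup MZ (condnorm2 f) \<le> 1"
    unfolding condnorm2_def cond_sq_bounded_def by (intro esssup_I) auto
  with f show "f \<in> unit_ballZX"
    unfolding unit_ballZX_def L2ZX_def cond_sq_bounded_def
    using order.strict_trans1 by fastforce
qed

lemma L2ZX_imp_cond_sq_bounded:
  assumes "f \<in> L2ZX"
  obtains C where "cond_sq_bounded f C"
proof
  define C where "C = enn2real (esssup MZ (condnorm2 f))"
  have "esssup MZ (condnorm2 f) = ennreal C"
    using assms unfolding L2ZX_def C_def by (auto simp: ennreal_enn2real_if less_top)
  moreover have "AE z in MZ. condnorm2 f z \<le> esssup MZ (condnorm2 f)" by (rule esssup_AE)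
  ultimately show "cond_sq_bounded f C"
    using assms unfolding cond_sq_bounded_def condnorm2_def L2ZX_def C_def by auto
qed

lemma measurable_cnj [measurable]:
  assumes "f \<in> borel_measurable M"
  shows "(\<lambda>x. cnj (f x)) \<in> borel_measurable M"
proof -
  have "(\<lambda>x. cnj x) \<in> borel_measurable borel"
    by (intro borel_measurable_continuous_onI continuous_on_cnj continuous_on_id)
  from measurable_compose[OF assms this] show ?thesis .
qed

lemma measurable_condexpX [measurable]: "condexpX h \<in> borel_measurable MZ"
  unfolding condexpX_def by measurable

lemma condexpX_add:
  assumes "integrable MZ g" "integrable MZ h"
  shows "AE z in MZ. condexpX (\<lambda>w. g w + h w) z = condexpX g z + condexpX h z"
proof -
  have "AE z in MZ. real_cond_exp MZ Xalg (\<lambda>w. Re (g w) + Re (h w)) z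
      = real_cond_exp MZ Xalg (\<lambda>w. Re (g w)) z + real_cond_exp MZ Xalg (\<lambda>w. Re (h w)) z"
    "AE z in MZ. real_cond_exp MZ Xalg (\<lambda>w. Im (g w) + Im (h w)) z
      = real_cond_exp MZ Xalg (\<lambda>w. Im (g w)) z + real_cond_exp MZ Xalg (\<lambda>w. Im (h w)) z"
    by (rule Z.real_cond_exp_add; use assms in auto)+
  then show ?thesis by eventually_elim (simp add: condexpX_def complex_eq_iff)
qed

lemma condexpX_scaleR:
  assumes "integrable MZ h"
  shows "AE z in MZ. condexpX (\<lambda>w. complex_of_real c * h w) z = complex_of_real c * condexpX h z"
proof -
  have "AE z in MZ. real_cond_exp MZ Xalg (\<lambda>w. c * Re (h w)) z = c * real_cond_exp MZ Xalg (\<lambda>w. Re (h w)) z"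
    "AE z in MZ. real_cond_exp MZ Xalg (\<lambda>w. c * Im (h w)) z = c * real_cond_exp MZ Xalg (\<lambda>w. Im (h w)) z"
    by (rule Z.real_cond_exp_cmult; use assms in auto)+
  then show ?thesis by eventually_elim (simp add: condexpX_def complex_eq_iff)
qed

text \<open>The factor 2 comes from treating real and imaginary parts separately.\<close>

lemma cmod_condexpX_le:
  assumes [measurable]: "h \<in> borel_measurable MZ"
  shows "AE z in MZ. ennreal (cmod (condexpX h z)) \<le> 2 * nn_cond_exp MZ Xalg (\<lambda>w. ennreal (cmod (h w))) z"
proof -
  let ?N = "nn_cond_exp MZ Xalg (\<lambda>w. ennreal (cmod (h w)))"
  let ?R = "real_cond_exp MZ Xalg (\<lambda>w. Re (h w))" and ?I = "real_cond_exp MZ Xalg (\<lambda>w. Im (h w))"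
  have "AE z in MZ. ennreal \<bar>?R z\<bar> \<le> nn_cond_exp MZ Xalg (\<lambda>w. ennreal \<bar>Re (h w)\<bar>) z"
    "AE z in MZ. ennreal \<bar>?I z\<bar> \<le> nn_cond_exp MZ Xalg (\<lambda>w. ennreal \<bar>Im (h w)\<bar>) z"
    by (rule Z.real_cond_exp_abs; measurable)+
  moreover have "AE z in MZ. nn_cond_exp MZ Xalg (\<lambda>w. ennreal \<bar>Re (h w)\<bar>) z \<le> ?N z"
    "AE z in MZ. nn_cond_exp MZ Xalg (\<lambda>w. ennreal \<bar>Im (h w)\<bar>) z \<le> ?N z"
    by (rule Z.nn_cond_exp_mono; simp add: ennreal_leI abs_Re_le_cmod abs_Im_le_cmod)+
  ultimately show ?thesis
  proof eventually_elim
    case (elim z)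
    have "ennreal (cmod (condexpX h z)) \<le> ennreal (\<bar>?R z\<bar> + \<bar>?I z\<bar>)"
      using cmod_le[of "condexpX h z"] by (intro ennreal_leI) (simp add: condexpX_def)
    also have "\<dots> = ennreal \<bar>?R z\<bar> + ennreal \<bar>?I z\<bar>" by (rule ennreal_plus) auto
    also have "\<dots> \<le> ?N z + ?N z"
      using elim by (intro add_mono) (auto intro: order_trans)
    finally show ?case by (simp add: mult_2)
  qed
qed

lemma nn_integral_cmod_condexpX_le:
  assumes [measurable]: "h \<in> borel_measurable MZ"
  shows "(\<integral>\<^sup>+ z. ennreal (cmod (condexpX h z)) \<partial>MZ) \<le> 2 * (\<integral>\<^sup>+ z. ennreal (cmod (h z)) \<partial>MZ)"
proof -
  have "(\<integral>\<^sup>+ z. ennreal (cmod (condexpX h z)) \<partial>MZ)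
      \<le> (\<integral>\<^sup>+ z. 2 * nn_cond_exp MZ Xalg (\<lambda>w. ennreal (cmod (h w))) z \<partial>MZ)"
    by (rule nn_integral_mono_AE[OF cmod_condexpX_le[OF assms]])
  also have "\<dots> = 2 * (\<integral>\<^sup>+ z. 1 * nn_cond_exp MZ Xalg (\<lambda>w. ennreal (cmod (h w))) z \<partial>MZ)"
    by (simp add: nn_integral_cmult)
  also have "\<dots> = 2 * (\<integral>\<^sup>+ z. 1 * ennreal (cmod (h z)) \<partial>MZ)"
    by (subst Z.nn_cond_exp_intg) auto
  finally show ?thesis by simp
qed

lemma integrable_mult_cnj:
  assumes a: "cond_sq_bounded a A" and b: "cond_sq_bounded b B"
  shows "integrable MZ (\<lambda>w. a w * cnj (b w))"
proof (rule integrableI_bounded)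
  note [measurable] = cond_sq_bounded_measurable[OF a] cond_sq_bounded_measurable[OF b]
  have "(\<integral>\<^sup>+ w. ennreal (norm (a w * cnj (b w))) \<partial>MZ)
      \<le> (\<integral>\<^sup>+ w. ennreal ((cmod (a w))\<^sup>2) + ennreal ((cmod (b w))\<^sup>2) \<partial>MZ)"
    using cmod_mult_cnj_le[of 1]
    by (intro nn_integral_mono) (simp flip: ennreal_plus add: ennreal_leI)
  also have "\<dots> = sq_L2 a + sq_L2 b"
    unfolding sq_L2_def by (rule nn_integral_add) auto
  also have "\<dots> \<le> ennreal A + ennreal B"
    by (intro add_mono sq_L2_le_of_cond_sq_bounded a b)
  also have "\<dots> < \<infinity>"
    by (simp flip: ennreal_plus)
  finally show "(\<integral>\<^sup>+ w. ennreal (norm (a w * cnj (b w))) \<partial>MZ) < \<infinity>" .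
qed (use a b in measurable)

lemma cmod_condexpX_mult_cnj_le:
  assumes a: "cond_sq_bounded a A" and b: "cond_sq_bounded b B"
  shows "AE z in MZ. cmod (condexpX (\<lambda>w. a w * cnj (b w)) z) \<le> 2 * (A + B)"
proof -
  note [measurable] = cond_sq_bounded_measurable[OF a] cond_sq_bounded_measurable[OF b]
  have AB: "A \<ge> 0" "B \<ge> 0" using a b by (auto simp: cond_sq_bounded_def)
  let ?E = "\<lambda>a. nn_cond_exp MZ Xalg (\<lambda>z. ennreal ((cmod (a z))\<^sup>2))"
  have "AE z in MZ. nn_cond_exp MZ Xalg (\<lambda>w. ennreal (cmod (a w * cnj (b w)))) z
      \<le> nn_cond_exp MZ Xalg (\<lambda>w. 1 * ennreal ((cmod (a w))\<^sup>2) + 1 * ennreal ((cmod (b w))\<^sup>2)) z"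
    using cmod_mult_cnj_le[of 1]
    by (intro Z.nn_cond_exp_mono AE_I2) (auto simp flip: ennreal_plus intro: ennreal_leI)
  moreover have "AE z in MZ. nn_cond_exp MZ Xalg (\<lambda>w. 1 * ennreal ((cmod (a w))\<^sup>2) + 1 * ennreal ((cmod (b w))\<^sup>2)) z
     = 1 * ?E a z + 1 * ?E b z"
    by (rule Z.nn_cond_exp_lin_comb) auto
  moreover have "AE z in MZ. ?E a z \<le> ennreal A" "AE z in MZ. ?E b z \<le> ennreal B"
    using a b by (auto simp: cond_sq_bounded_def)
  moreover have "AE z in MZ. ennreal (cmod (condexpX (\<lambda>w. a w * cnj (b w)) z))
      \<le> 2 * nn_cond_exp MZ Xalg (\<lambda>w. ennreal (cmod (a w * cnj (b w)))) z"
    by (rule cmod_condexpX_le) measurable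
  ultimately show ?thesis
  proof eventually_elim
    case (elim z)
    have "ennreal (cmod (condexpX (\<lambda>w. a w * cnj (b w)) z))
        \<le> 2 * nn_cond_exp MZ Xalg (\<lambda>w. ennreal (cmod (a w * cnj (b w)))) z"
      using elim(5) by simp
    also have "\<dots> \<le> 2 * (ennreal A + ennreal B)"
      using elim(1-4) by (intro mult_left_mono) (auto intro: order_trans add_mono)
    also have "\<dots> = ennreal (2 * (A + B))"
      using AB by (simp add: ennreal_plus ennreal_mult)
    finally show ?case
      using AB by (subst (asm) ennreal_le_iff) auto
  qed
qed

text \<open>Proof: \<open>\<parallel>h\<parallel>\<^sub>2\<^sup>2 \<le> \<parallel>h\<parallel>\<^sub>\<infinity> \<parallel>h\<parallel>\<^sub>1\<close>; the sup bound comes from the conditional bounds,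
  the \<open>L\<^sup>1\<close> bound from AM-GM with weight \<open>d\<close>.\<close>

lemma sq_L2_condexpX_mult_cnj_le:
  assumes a: "cond_sq_bounded a A" and b: "cond_sq_bounded b B" and "d > 0"
    and "sq_L2 a \<le> ennreal \<alpha>" "sq_L2 b \<le> ennreal \<beta>" "\<alpha> \<ge> 0" "\<beta> \<ge> 0"
  shows "sq_L2 (condexpX (\<lambda>w. a w * cnj (b w))) \<le> ennreal (4 * (A + B) * (\<alpha> / d + d * \<beta>))"
proof -
  note [measurable] = cond_sq_bounded_measurable[OF a] cond_sq_bounded_measurable[OF b]
  have AB: "A \<ge> 0" "B \<ge> 0" using a b by (auto simp: cond_sq_bounded_def)
  let ?c = "condexpX (\<lambda>w. a w * cnj (b w))"
  have "sq_L2 ?c \<le> (\<integral>\<^sup>+ z. ennreal (2 * (A + B)) * ennreal (cmod (?c z)) \<partial>MZ)"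
    unfolding sq_L2_def using cmod_condexpX_mult_cnj_le[OF a b]
  proof (intro nn_integral_mono_AE, eventually_elim)
    case (elim z)
    then have "(cmod (?c z))\<^sup>2 \<le> 2 * (A + B) * cmod (?c z)"
      by (simp add: power2_eq_square mult_right_mono)
    then have "ennreal ((cmod (?c z))\<^sup>2) \<le> ennreal (2 * (A + B) * cmod (?c z))"
      by (rule ennreal_leI)
    also have "\<dots> = ennreal (2 * (A + B)) * ennreal (cmod (?c z))"
      using AB by (intro ennreal_mult) auto
    finally show ?case .
  qed
  also have "\<dots> = ennreal (2 * (A + B)) * (\<integral>\<^sup>+ z. ennreal (cmod (?c z)) \<partial>MZ)"
    by (rule nn_integral_cmult) auto
  also have "\<dots> \<le> ennreal (2 * (A + B)) * (2 * (\<integral>\<^sup>+ z. ennreal (cmod (a z * cnj (b z))) \<partial>MZ))"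
    by (intro mult_left_mono nn_integral_cmod_condexpX_le) auto
  also have "(\<integral>\<^sup>+ z. ennreal (cmod (a z * cnj (b z))) \<partial>MZ)
      \<le> (\<integral>\<^sup>+ z. ennreal (1 / d) * ennreal ((cmod (a z))\<^sup>2) + ennreal d * ennreal ((cmod (b z))\<^sup>2) \<partial>MZ)"
    using cmod_mult_cnj_le[OF \<open>d > 0\<close>] \<open>d > 0\<close>
    by (intro nn_integral_mono) (simp flip: ennreal_mult ennreal_plus add: ennreal_leI)
  also have "\<dots> = ennreal (1 / d) * sq_L2 a + ennreal d * sq_L2 b"
    unfolding sq_L2_def by (subst nn_integral_add) (auto simp: nn_integral_cmult)
  also have "\<dots> \<le> ennreal (1 / d) * ennreal \<alpha> + ennreal d * ennreal \<beta>"
    using assms by (intro add_mono mult_left_mono) auto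
  also have "\<dots> = ennreal (\<alpha> / d + d * \<beta>)"
    using assms by (simp flip: ennreal_mult ennreal_plus)
  finally have "sq_L2 ?c \<le> ennreal (2 * (A + B)) * ennreal (2 * (\<alpha> / d + d * \<beta>))"
    using assms by (simp add: mult_left_mono numeral_mult_ennreal)
  also have "\<dots> = ennreal (4 * (A + B) * (\<alpha> / d + d * \<beta>))"
    using assms AB by (subst ennreal_mult[symmetric]) (auto simp: field_simps)
  finally show ?thesis .
qed

locale X_extension =
  fixes T0 :: "real \<Rightarrow> real" and U :: "real \<times> real \<Rightarrow> real \<times> real"
  assumes T0: "T0 \<in> G MX"
    and measurable_U [measurable]: "U \<in> MZ \<rightarrow>\<^sub>M MZ"
    and distr_U: "distr MZ MZ U = MZ"
    and fst_U: "\<And>z. z \<in> space MZ \<Longrightarrow> fst (U z) = T0 (fst z)"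
begin

lemma measurable_U_Xalg: "U \<in> Xalg \<rightarrow>\<^sub>M Xalg"
  unfolding Xalg_def
proof (rule measurable_vimage_algebra2)
  show "U \<in> space (vimage_algebra (space MZ) fst MX) \<rightarrow> space MZ"
    using measurable_space[OF measurable_U] by auto
  have "(\<lambda>z. T0 (fst z)) \<in> vimage_algebra (space MZ) fst MX \<rightarrow>\<^sub>M MX"
    using T0 measurable_space[OF measurable_fst_MZ] unfolding G_def
    by (intro measurable_compose[OF measurable_vimage_algebra1]) auto
  then show "(\<lambda>z. fst (U z)) \<in> vimage_algebra (space MZ) fst MX \<rightarrow>\<^sub>M MX"
    by (rule measurable_cong[THEN iffD1, rotated]) (simp add: fst_U)
qed

text \<open>This is where the invertibility of \<open>T0\<close> is used.\<close>

lemma Xalg_eq_vimage_U: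
  assumes "A \<in> sets Xalg"
  shows "\<exists>A' \<in> sets Xalg. \<forall>z \<in> space MZ. z \<in> A \<longleftrightarrow> U z \<in> A'"
proof -
  obtain B where B: "B \<in> sets MX" and A: "A = fst -` B \<inter> space MZ"
    using assms unfolding sets_Xalg by auto
  have bij: "bij_betw T0 (space MX) (space MX)"
    and inv: "the_inv_into (space MX) T0 \<in> MX \<rightarrow>\<^sub>M MX"
    using T0 unfolding G_def by auto
  define B' where "B' = the_inv_into (space MX) T0 -` B \<inter> space MX"
  have "B' \<in> sets MX" unfolding B'_def using inv B by (rule measurable_sets)
  then have "fst -` B' \<inter> space MZ \<in> sets Xalg" unfolding sets_Xalg by auto
  moreover have "z \<in> A \<longleftrightarrow> U z \<in> fst -` B' \<inter> space MZ" if z: "z \<in> space MZ" for z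
  proof -
    have "fst z \<in> space MX" "U z \<in> space MZ"
      using z measurable_space[OF measurable_fst_MZ] measurable_space[OF measurable_U] by auto
    moreover have "fst (U z) = T0 (fst z)" by (rule fst_U[OF z])
    ultimately show ?thesis
      using z bij unfolding A B'_def
      by (auto simp: bij_betw_def the_inv_into_f_f)
  qed
  ultimately show ?thesis by blast
qed

lemma nn_integral_comp_U:
  "h \<in> borel_measurable MZ \<Longrightarrow> (\<integral>\<^sup>+ z. h (U z) \<partial>MZ) = (\<integral>\<^sup>+ w. h w \<partial>MZ)"
  using nn_integral_distr[OF measurable_U, of h] by (simp add: distr_U)

lemma nn_cond_exp_comp:
  assumes [measurable]: "h \<in> borel_measurable MZ"
  shows "AE z in MZ. nn_cond_exp MZ Xalg (\<lambda>w. h (U w)) z = nn_cond_exp MZ Xalg h (U z)"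
proof -
  let ?E = "nn_cond_exp MZ Xalg h"
  have "AE z in MZ. ?E (U z) = nn_cond_exp MZ Xalg (\<lambda>w. h (U w)) z"
  proof (rule Z.nn_cond_exp_charact)
    show "(\<lambda>z. ?E (U z)) \<in> borel_measurable Xalg"
      by (intro measurable_compose[OF measurable_U_Xalg] borel_measurable_nn_cond_exp)
    fix A assume "A \<in> sets Xalg"
    then obtain A' where A': "A' \<in> sets Xalg" and A: "\<forall>z \<in> space MZ. z \<in> A \<longleftrightarrow> U z \<in> A'"
      using Xalg_eq_vimage_U by blast
    have [measurable]: "A' \<in> sets MZ" using A' subalgebra_Xalg by (auto simp: subalgebra_def)
    have ind: "\<And>z. z \<in> space MZ \<Longrightarrow> indicator A z = (indicator A' (U z) :: ennreal)"
      using A by (simp add: indicator_def)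
    have "(\<integral>\<^sup>+ z \<in> A. h (U z) \<partial>MZ) = (\<integral>\<^sup>+ z. indicator A' (U z) * h (U z) \<partial>MZ)"
      by (rule nn_integral_cong) (simp add: ind mult.commute)
    also have "\<dots> = (\<integral>\<^sup>+ w. indicator A' w * h w \<partial>MZ)"
      by (rule nn_integral_comp_U[of "\<lambda>w. indicator A' w * h w"]) measurable
    also have "\<dots> = (\<integral>\<^sup>+ w. indicator A' w * ?E w \<partial>MZ)"
      by (rule Z.nn_cond_exp_intg[symmetric]) (auto intro: borel_measurable_indicator A')
    also have "\<dots> = (\<integral>\<^sup>+ z. indicator A' (U z) * ?E (U z) \<partial>MZ)"
      by (rule nn_integral_comp_U[of "\<lambda>w. indicator A' w * ?E w", symmetric]) measurable
    also have "\<dots> = (\<integral>\<^sup>+ z \<in> A. ?E (U z) \<partial>MZ)"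
      by (rule nn_integral_cong) (simp add: ind mult.commute)
    finally show "(\<integral>\<^sup>+ z \<in> A. h (U z) \<partial>MZ) = (\<integral>\<^sup>+ z \<in> A. ?E (U z) \<partial>MZ)" .
  qed simp
  then show ?thesis by (auto elim: eventually_mono)
qed

lemma cond_sq_bounded_comp:
  assumes "cond_sq_bounded b C"
  shows "cond_sq_bounded (\<lambda>z. b (U z)) C"
proof -
  note [measurable] = cond_sq_bounded_measurable[OF assms]
  let ?E = "nn_cond_exp MZ Xalg (\<lambda>z. ennreal ((cmod (b z))\<^sup>2))"
  have "AE z in distr MZ MZ U. ?E z \<le> ennreal C"
    using assms unfolding distr_U cond_sq_bounded_def by auto
  then have "AE z in MZ. ?E (U z) \<le> ennreal C" by (rule AE_distrD[OF measurable_U])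
  moreover have "AE z in MZ. nn_cond_exp MZ Xalg (\<lambda>w. ennreal ((cmod (b (U w)))\<^sup>2)) z = ?E (U z)"
    by (rule nn_cond_exp_comp) measurable
  ultimately have "AE z in MZ. nn_cond_exp MZ Xalg (\<lambda>w. ennreal ((cmod (b (U w)))\<^sup>2)) z \<le> ennreal C"
    by eventually_elim simp
  then show ?thesis using assms unfolding cond_sq_bounded_def by auto
qed

lemma cond_sq_bounded_funpow:
  "cond_sq_bounded b C \<Longrightarrow> cond_sq_bounded (\<lambda>z. b ((U ^^ m) z)) C"
  by (induction m) (auto simp: funpow_swap1 dest: cond_sq_bounded_comp)

lemma distr_funpow_U: "distr MZ MZ (U ^^ m) = MZ"
proof (induction m)
  case (Suc m)
  have "distr MZ MZ (U ^^ Suc m) = distr MZ MZ ((U ^^ m) \<circ> U)"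
    by (simp only: funpow_Suc_right)
  also have "\<dots> = distr (distr MZ MZ U) MZ (U ^^ m)"
    by (rule distr_distr[symmetric]) (auto intro: measurable_compose_n measurable_U)
  also have "\<dots> = MZ" by (simp only: distr_U Suc.IH)
  finally show ?case .
qed (simp add: distr_id2 del: distr_id)

lemma sq_L2_funpow:
  assumes [measurable]: "u \<in> borel_measurable MZ"
  shows "sq_L2 (\<lambda>z. u ((U ^^ m) z)) = sq_L2 u"
proof -
  have "sq_L2 u = (\<integral>\<^sup>+ z. ennreal ((cmod (u z))\<^sup>2) \<partial>distr MZ MZ (U ^^ m))"
    by (simp add: distr_funpow_U sq_L2_def)
  also have "\<dots> = sq_L2 (\<lambda>z. u ((U ^^ m) z))"
    unfolding sq_L2_def
    by (rule nn_integral_distr) (auto intro: measurable_compose_n measurable_U)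
  finally show ?thesis ..
qed

end

lemma X_extension_G_ext:
  assumes "T0 \<in> G MX" "T \<in> G_ext T0"
  shows "X_extension T0 T"
proof
  show "T \<in> MZ \<rightarrow>\<^sub>M MZ" "distr MZ MZ T = MZ" using assms(2) unfolding G_ext_def G_def by auto
  fix z assume "z \<in> space MZ"
  then show "fst (T z) = T0 (fst z)"
    using assms(2) unfolding G_ext_def space_MZ space_MX by (cases z) auto
qed (rule assms(1))

lemma X_extension_liftX:
  assumes "T0 \<in> G MX"
  shows "X_extension T0 (liftX T0)"
proof
  have [measurable]: "T0 \<in> MX \<rightarrow>\<^sub>M MX" and distr_T0: "distr MX MX T0 = MX"
    using assms unfolding G_def by auto
  have lift: "liftX T0 = (\<lambda>z. (T0 (fst z), snd z))" unfolding liftX_def by (auto simp: split_def)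
  show "liftX T0 \<in> MZ \<rightarrow>\<^sub>M MZ" unfolding lift MZ_def by measurable
  have "sigma_finite_measure (distr MX MX (\<lambda>x. x))"
    using prob_space_imp_sigma_finite[OF prob_space_MX] by simp
  then have "distr MX MX T0 \<Otimes>\<^sub>M distr MX MX (\<lambda>x. x)
      = distr (MX \<Otimes>\<^sub>M MX) (MX \<Otimes>\<^sub>M MX) (\<lambda>(x, y). (T0 x, y))"
    by (intro pair_measure_distr) auto
  then show "distr MZ MZ (liftX T0) = MZ" unfolding MZ_def liftX_def distr_T0 by simp
qed (use assms in \<open>auto simp: liftX_def split_def\<close>)

lemma ennreal_tendsto_zero_approx:
  fixes a :: "nat \<Rightarrow> ennreal"
  assumes approx: "\<And>e. e > 0 \<Longrightarrow> \<exists>b. b \<longlonglongrightarrow> 0 \<and> (\<forall>k. a k \<le> b k + ennreal e)"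
  shows "a \<longlonglongrightarrow> 0"
proof (rule order_tendstoI)
  fix y :: ennreal assume "0 < y"
  then obtain z where "0 < z" "z < y" using dense by blast
  then obtain r where r: "z = ennreal r" "r > 0"
    by (cases z) (auto simp: top_unique)
  obtain b where b: "b \<longlonglongrightarrow> 0" and le: "\<And>k. a k \<le> b k + ennreal (r / 2)"
    using approx[of "r / 2"] \<open>r > 0\<close> by auto
  have "eventually (\<lambda>k. b k < ennreal (r / 2)) sequentially"
    using b \<open>r > 0\<close> by (intro order_tendstoD(2)) auto
  then show "eventually (\<lambda>k. a k < y) sequentially"
  proof eventually_elim
    case (elim k)
    have "a k \<le> ennreal (r / 2) + ennreal (r / 2)"
      using le[of k] elim by (meson add_right_mono less_imp_le order_trans)
    also have "\<dots> = z" using r by (simp flip: ennreal_plus)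
    finally show ?case using \<open>z < y\<close> by simp
  qed
qed simp

definition ccorr ::
    "(real \<times> real \<Rightarrow> real \<times> real) \<Rightarrow> nat \<Rightarrow> (real \<times> real \<Rightarrow> complex)
      \<Rightarrow> (real \<times> real \<Rightarrow> complex) \<Rightarrow> real \<times> real \<Rightarrow> complex" where
  "ccorr U m f g = condexpX (\<lambda>w. f ((U ^^ m) w) * cnj (g w))"

lemma measurable_ccorr [measurable]: "ccorr U m f g \<in> borel_measurable MZ"
  by (simp add: ccorr_def)

context X_extension
begin

lemma sq_L2_ccorr_le:
  assumes "cond_sq_bounded f A" "cond_sq_bounded g B"
  shows "sq_L2 (ccorr U m f g) \<le> ennreal (4 * (A + B) * (A + B))"
  using sq_L2_condexpX_mult_cnj_le[of _ A g B 1 A B, OF cond_sq_bounded_funpow[OF assms(1)] assms(2)]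
    sq_L2_le_of_cond_sq_bounded[OF cond_sq_bounded_funpow[OF assms(1)]]
    sq_L2_le_of_cond_sq_bounded[OF assms(2)] assms
  by (simp add: ccorr_def cond_sq_bounded_nonneg)

lemma ccorr_scaleR:
  assumes "cond_sq_bounded f A" "cond_sq_bounded g B"
  shows "AE z in MZ. ccorr U m (\<lambda>w. complex_of_real c * f w) (\<lambda>w. complex_of_real c * g w) z
    = complex_of_real (c\<^sup>2) * ccorr U m f g z"
proof -
  have "integrable MZ (\<lambda>w. f ((U ^^ m) w) * cnj (g w))"
    by (rule integrable_mult_cnj[OF cond_sq_bounded_funpow[OF assms(1)] assms(2)])
  from condexpX_scaleR[OF this, of "c\<^sup>2"] show ?thesis
    by (simp add: ccorr_def power2_eq_square algebra_simps)
qed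

text \<open>The difference is \<open>E((f - f')\<circ>U\<^sup>m \<cdot> cnj g | X) + E(f'\<circ>U\<^sup>m \<cdot> cnj (g - g') | X)\<close>;
  the AM-GM weights \<open>\<eta>\<close> and \<open>1/\<eta>\<close> balance the two factors of each term.\<close>

lemma sq_L2_ccorr_diff_le:
  assumes f: "cond_sq_bounded f 1" and g: "cond_sq_bounded g 1"
    and f': "cond_sq_bounded f' 1" and g': "cond_sq_bounded g' 1"
    and "\<eta> > 0"
    and close_f: "sq_L2 (\<lambda>z. f z - f' z) \<le> ennreal (\<eta>\<^sup>2)"
    and close_g: "sq_L2 (\<lambda>z. g z - g' z) \<le> ennreal (\<eta>\<^sup>2)"
  shows "sq_L2 (\<lambda>z. ccorr U m f g z - ccorr U m f' g' z) \<le> ennreal (160 * \<eta>)"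
proof -
  note [measurable] = cond_sq_bounded_measurable[OF f] cond_sq_bounded_measurable[OF g]
    cond_sq_bounded_measurable[OF f'] cond_sq_bounded_measurable[OF g']
  let ?fU = "\<lambda>w. f ((U ^^ m) w)" and ?f'U = "\<lambda>w. f' ((U ^^ m) w)"
  have fU: "cond_sq_bounded ?fU 1" and f'U: "cond_sq_bounded ?f'U 1"
    using f f' by (auto intro: cond_sq_bounded_funpow)
  have dfU: "cond_sq_bounded (\<lambda>w. ?fU w - ?f'U w) 4"
    using cond_sq_bounded_diff[OF fU f'U] by simp
  have dg: "cond_sq_bounded (\<lambda>w. g w - g' w) 4"
    using cond_sq_bounded_diff[OF g g'] by simp
  let ?t1 = "condexpX (\<lambda>w. (?fU w - ?f'U w) * cnj (g w))"
  let ?t2 = "condexpX (\<lambda>w. ?f'U w * cnj (g w - g' w))"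
  have split_f: "(\<lambda>w. ?fU w * cnj (g w)) = (\<lambda>w. (?fU w - ?f'U w) * cnj (g w) + ?f'U w * cnj (g w))"
    by (simp add: algebra_simps)
  have split_g: "(\<lambda>w. ?f'U w * cnj (g w)) = (\<lambda>w. ?f'U w * cnj (g' w) + ?f'U w * cnj (g w - g' w))"
    by (simp add: algebra_simps)
  have "AE z in MZ. ccorr U m f g z = ?t1 z + condexpX (\<lambda>w. ?f'U w * cnj (g w)) z"
    unfolding ccorr_def split_f
    by (intro condexpX_add integrable_mult_cnj[OF dfU g] integrable_mult_cnj[OF f'U g])
  moreover have "AE z in MZ. condexpX (\<lambda>w. ?f'U w * cnj (g w)) z = ccorr U m f' g' z + ?t2 z"
    unfolding ccorr_def split_g
    by (intro condexpX_add integrable_mult_cnj[OF f'U g'] integrable_mult_cnj[OF f'U dg])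
  ultimately have "AE z in MZ. ccorr U m f g z - ccorr U m f' g' z = ?t1 z + ?t2 z"
    by eventually_elim simp
  then have "sq_L2 (\<lambda>z. ccorr U m f g z - ccorr U m f' g' z) = sq_L2 (\<lambda>z. ?t1 z + ?t2 z)"
    by (rule sq_L2_cong_AE)
  also have "\<dots> \<le> 2 * sq_L2 ?t1 + 2 * sq_L2 ?t2"
    by (rule sq_L2_add_le) measurable
  also have "\<dots> \<le> 2 * ennreal (4 * (4 + 1) * (\<eta>\<^sup>2 / \<eta> + \<eta> * 1))
      + 2 * ennreal (4 * (1 + 4) * (1 / (1 / \<eta>) + (1 / \<eta>) * \<eta>\<^sup>2))"
    using \<open>\<eta> > 0\<close> sq_L2_funpow[of "\<lambda>z. f z - f' z" m] close_f close_g
      sq_L2_le_of_cond_sq_bounded[OF g] sq_L2_le_of_cond_sq_bounded[OF f'U]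
    by (intro add_mono mult_left_mono sq_L2_condexpX_mult_cnj_le dfU g f'U dg) auto
  also have "\<dots> = ennreal (160 * \<eta>)"
    using \<open>\<eta> > 0\<close> by (simp add: power2_eq_square numeral_mult_ennreal flip: ennreal_plus)
  finally show ?thesis .
qed

end

lemma sq_L2_ccorr_gap_finite:
  assumes "X_extension T0 T" "X_extension T1 S" "cond_sq_bounded f A" "cond_sq_bounded g B"
  shows "sq_L2 (\<lambda>z. ccorr T m f g z - ccorr S m f g z) < \<infinity>"
proof -
  have "sq_L2 (\<lambda>z. ccorr T m f g z - ccorr S m f g z)
      \<le> 2 * sq_L2 (ccorr T m f g) + 2 * sq_L2 (ccorr S m f g)"
    by (rule sq_L2_diff_le) measurable
  also have "\<dots> \<le> 2 * ennreal (4 * (A + B) * (A + B)) + 2 * ennreal (4 * (A + B) * (A + B))"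
    using X_extension.sq_L2_ccorr_le[OF assms(1,3,4)] X_extension.sq_L2_ccorr_le[OF assms(2,3,4)]
    by (intro add_mono mult_left_mono) auto
  also have "\<dots> < \<infinity>" by (simp add: ennreal_mult_less_top)
  finally show ?thesis .
qed

lemma tendsto_L2norm_ccorr_gap_iff:
  assumes "X_extension T0 T" "X_extension T1 S" "cond_sq_bounded f A" "cond_sq_bounded g B"
  shows "(\<lambda>k. L2norm (\<lambda>z. ccorr T (n k) f g z - ccorr S (n k) f g z)) \<longlonglongrightarrow> 0
    \<longleftrightarrow> (\<lambda>k. sq_L2 (\<lambda>z. ccorr T (n k) f g z - ccorr S (n k) f g z)) \<longlonglongrightarrow> 0"
  using sq_L2_ccorr_gap_finite[OF assms] by (intro L2norm_tendsto_zero_iff) auto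

lemma sq_L2_ccorr_gap_scaleR:
  assumes T: "X_extension T0 T" and S: "X_extension T1 S"
    and f: "cond_sq_bounded f A" and g: "cond_sq_bounded g B"
  shows "sq_L2 (\<lambda>z. ccorr T m (\<lambda>w. complex_of_real c * f w) (\<lambda>w. complex_of_real c * g w) z
                 - ccorr S m (\<lambda>w. complex_of_real c * f w) (\<lambda>w. complex_of_real c * g w) z)
    = ennreal ((c\<^sup>2)\<^sup>2) * sq_L2 (\<lambda>z. ccorr T m f g z - ccorr S m f g z)"
proof -
  from X_extension.ccorr_scaleR[OF T f g, of m c] X_extension.ccorr_scaleR[OF S f g, of m c]
  have "AE z in MZ.
      ccorr T m (\<lambda>w. complex_of_real c * f w) (\<lambda>w. complex_of_real c * g w) z
        - ccorr S m (\<lambda>w. complex_of_real c * f w) (\<lambda>w. complex_of_real c * g w) z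
      = complex_of_real (c\<^sup>2) * (ccorr T m f g z - ccorr S m f g z)"
    by eventually_elim (simp add: right_diff_distrib)
  then have "sq_L2 (\<lambda>z. ccorr T m (\<lambda>w. complex_of_real c * f w) (\<lambda>w. complex_of_real c * g w) z
                 - ccorr S m (\<lambda>w. complex_of_real c * f w) (\<lambda>w. complex_of_real c * g w) z)
      = sq_L2 (\<lambda>z. complex_of_real (c\<^sup>2) * (ccorr T m f g z - ccorr S m f g z))"
    by (rule sq_L2_cong_AE)
  also have "\<dots> = ennreal ((c\<^sup>2)\<^sup>2) * sq_L2 (\<lambda>z. ccorr T m f g z - ccorr S m f g z)"
    by (rule sq_L2_scaleR) measurable
  finally show ?thesis .
qed

lemma dense_unit_ball_sq_L2:
  assumes "D \<subseteq> unit_ballZX"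
    and dense: "\<forall>f \<in> unit_ballZX. \<forall>e > 0. \<exists>g \<in> D. L2norm (\<lambda>z. f z - g z) < e"
    and "f \<in> unit_ballZX" "\<eta> > 0"
  obtains f' where "f' \<in> D" "sq_L2 (\<lambda>z. f z - f' z) \<le> ennreal (\<eta>\<^sup>2)"
proof -
  obtain f' where f': "f' \<in> D" and close: "L2norm (\<lambda>z. f z - f' z) < \<eta>"
    using dense assms(3,4) by blast
  have f: "cond_sq_bounded f 1" and "cond_sq_bounded f' 1"
    using assms(1,3) f' by (auto simp: unit_ballZX_iff)
  then have bounded: "cond_sq_bounded (\<lambda>z. f z - f' z) 4"
    using cond_sq_bounded_diff by fastforce
  have "sq_L2 (\<lambda>z. f z - f' z) < \<infinity>"
    using sq_L2_le_of_cond_sq_bounded[OF bounded] by (simp add: le_less_trans)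
  with close have "sq_L2 (\<lambda>z. f z - f' z) < ennreal (\<eta>\<^sup>2)"
    by (intro sq_L2_less_of_L2norm_less) (use bounded in measurable)
  with f' show thesis by (intro that) auto
qed

lemma tendsto_ccorr_gap_unit_ball:
  assumes T: "X_extension T0 T" and S: "X_extension T1 S"
    and "D \<subseteq> unit_ballZX"
    and dense: "\<forall>f \<in> unit_ballZX. \<forall>e > 0. \<exists>g \<in> D. L2norm (\<lambda>z. f z - g z) < e"
    and gap_D: "\<And>f g. f \<in> D \<Longrightarrow> g \<in> D \<Longrightarrow>
      (\<lambda>k. sq_L2 (\<lambda>z. ccorr T (n k) f g z - ccorr S (n k) f g z)) \<longlonglongrightarrow> 0"
    and f: "f \<in> unit_ballZX" and g: "g \<in> unit_ballZX"
  shows "(\<lambda>k. sq_L2 (\<lambda>z. ccorr T (n k) f g z - ccorr S (n k) f g z)) \<longlonglongrightarrow> 0"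
proof (rule ennreal_tendsto_zero_approx)
  fix e :: real assume "e > 0"
  define \<eta> where "\<eta> = e / 1280"
  have "\<eta> > 0" using \<open>e > 0\<close> by (simp add: \<eta>_def)
  obtain f' g' where "f' \<in> D" "g' \<in> D"
    and close: "sq_L2 (\<lambda>z. f z - f' z) \<le> ennreal (\<eta>\<^sup>2)" "sq_L2 (\<lambda>z. g z - g' z) \<le> ennreal (\<eta>\<^sup>2)"
    using dense_unit_ball_sq_L2[OF assms(3) dense f \<open>\<eta> > 0\<close>]
      dense_unit_ball_sq_L2[OF assms(3) dense g \<open>\<eta> > 0\<close>] by metis
  have bounded: "cond_sq_bounded f 1" "cond_sq_bounded g 1" "cond_sq_bounded f' 1" "cond_sq_bounded g' 1"
    using f g \<open>f' \<in> D\<close> \<open>g' \<in> D\<close> assms(3) by (auto simp: unit_ballZX_iff)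
  note [measurable] = bounded[THEN cond_sq_bounded_measurable]
  let ?gap = "\<lambda>k f g z. ccorr T (n k) f g z - ccorr S (n k) f g z"
  let ?errT = "\<lambda>k z. ccorr T (n k) f g z - ccorr T (n k) f' g' z"
  let ?errS = "\<lambda>k z. ccorr S (n k) f g z - ccorr S (n k) f' g' z"
  have "sq_L2 (?gap k f g) \<le> 2 * sq_L2 (?gap k f' g') + ennreal e" for k
  proof -
    have "sq_L2 (?gap k f g) = sq_L2 (\<lambda>z. ?gap k f' g' z + (?errT k z - ?errS k z))"
      by (simp add: algebra_simps)
    also have "\<dots> \<le> 2 * sq_L2 (?gap k f' g') + 2 * (2 * sq_L2 (?errT k) + 2 * sq_L2 (?errS k))"
      by (intro add_mono mult_left_mono order.trans[OF sq_L2_add_le] sq_L2_diff_le order_refl)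
        measurable
    also have "\<dots> \<le> 2 * sq_L2 (?gap k f' g') + 2 * (2 * ennreal (160 * \<eta>) + 2 * ennreal (160 * \<eta>))"
      using X_extension.sq_L2_ccorr_diff_le[OF T bounded \<open>\<eta> > 0\<close> close]
        X_extension.sq_L2_ccorr_diff_le[OF S bounded \<open>\<eta> > 0\<close> close]
      by (intro add_mono mult_left_mono order_refl) auto
    also have "2 * (2 * ennreal (160 * \<eta>) + 2 * ennreal (160 * \<eta>)) = ennreal e"
      using \<open>\<eta> > 0\<close> by (simp add: \<eta>_def numeral_mult_ennreal flip: ennreal_plus)
    finally show ?thesis .
  qed
  moreover have "(\<lambda>k. 2 * sq_L2 (?gap k f' g')) \<longlonglongrightarrow> 0"
    using ennreal_tendsto_cmult[OF _ gap_D[OF \<open>f' \<in> D\<close> \<open>g' \<in> D\<close>], of 2] by simp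
  ultimately show "\<exists>b. b \<longlonglongrightarrow> 0 \<and> (\<forall>k. sq_L2 (?gap k f g) \<le> b k + ennreal e)"
    by blast
qed

lemma tendsto_ccorr_gap_L2ZX:
  assumes T: "X_extension T0 T" and S: "X_extension T1 S"
    and gap_unit: "\<And>f g. f \<in> unit_ballZX \<Longrightarrow> g \<in> unit_ballZX \<Longrightarrow>
      (\<lambda>k. sq_L2 (\<lambda>z. ccorr T (n k) f g z - ccorr S (n k) f g z)) \<longlonglongrightarrow> 0"
    and "f \<in> L2ZX" "g \<in> L2ZX"
  shows "(\<lambda>k. sq_L2 (\<lambda>z. ccorr T (n k) f g z - ccorr S (n k) f g z)) \<longlonglongrightarrow> 0"
proof -
  obtain A where f: "cond_sq_bounded f A" using assms(4) by (rule L2ZX_imp_cond_sq_bounded)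
  obtain B where g: "cond_sq_bounded g B" using assms(5) by (rule L2ZX_imp_cond_sq_bounded)
  define c where "c = 1 + A + B"
  have "A \<ge> 0" "B \<ge> 0" using f g by (auto dest: cond_sq_bounded_nonneg)
  then have "c \<ge> 1" by (simp add: c_def)
  then have "c \<le> c\<^sup>2" using mult_right_mono[of 1 c c] by (simp add: power2_eq_square)
  then have "A \<le> c\<^sup>2" "B \<le> c\<^sup>2" using \<open>A \<ge> 0\<close> \<open>B \<ge> 0\<close> by (auto simp: c_def)
  let ?f1 = "\<lambda>z. complex_of_real (1 / c) * f z" and ?g1 = "\<lambda>z. complex_of_real (1 / c) * g z"
  have f1: "cond_sq_bounded ?f1 1" and g1: "cond_sq_bounded ?g1 1"
    using cond_sq_bounded_scaleR[OF f, of "1 / c"] cond_sq_bounded_scaleR[OF g, of "1 / c"]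
      \<open>c \<ge> 1\<close> \<open>A \<le> c\<^sup>2\<close> \<open>B \<le> c\<^sup>2\<close>
    by (auto elim!: cond_sq_bounded_mono simp: power_divide field_simps)
  have unscale: "f = (\<lambda>z. complex_of_real c * ?f1 z)" "g = (\<lambda>z. complex_of_real c * ?g1 z)"
    using \<open>c \<ge> 1\<close> by auto
  have "sq_L2 (\<lambda>z. ccorr T (n k) f g z - ccorr S (n k) f g z)
      = ennreal ((c\<^sup>2)\<^sup>2) * sq_L2 (\<lambda>z. ccorr T (n k) ?f1 ?g1 z - ccorr S (n k) ?f1 ?g1 z)" for k
    using sq_L2_ccorr_gap_scaleR[OF T S f1 g1, of "n k" c] unfolding unscale[symmetric] .
  with ennreal_tendsto_cmult[OF _ gap_unit, of "ennreal ((c\<^sup>2)\<^sup>2)" ?f1 ?g1] f1 g1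
  show ?thesis by (simp add: unit_ballZX_iff)
qed

theorem lemma4p3:
  fixes T0 :: "real \<Rightarrow> real"
    and T :: "real \<times> real \<Rightarrow> real \<times> real"
    and D :: "(real \<times> real \<Rightarrow> complex) set"
    and n :: "nat \<Rightarrow> nat"
  assumes "T0 \<in> G MX"
    and "T \<in> G_ext T0"
    and "D \<subseteq> unit_ballZX"
    and "\<forall>f \<in> unit_ballZX. \<forall>e > 0. \<exists>g \<in> D. L2norm (\<lambda>z. f z - g z) < e"
    and "strict_mono n"
    and "\<forall>fi \<in> D. \<forall>fj \<in> D.
           (\<lambda>k. L2norm (\<lambda>z. condexpX (\<lambda>w. fi ((T ^^ n k) w) * cnj (fj w)) z
                           - condexpX (\<lambda>w. fi ((liftX T0 ^^ n k) w) * cnj (fj w)) z))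
           \<longlonglongrightarrow> 0"
  shows "T \<in> R_ext T0"
proof -
  have T: "X_extension T0 T" using assms(1,2) by (rule X_extension_G_ext)
  have S: "X_extension T0 (liftX T0)" using assms(1) by (rule X_extension_liftX)
  let ?gap = "\<lambda>k f g z. ccorr T (n k) f g z - ccorr (liftX T0) (n k) f g z"
  have gap_D: "(\<lambda>k. sq_L2 (?gap k f g)) \<longlonglongrightarrow> 0" if "f \<in> D" "g \<in> D" for f g
  proof -
    have "cond_sq_bounded f 1" "cond_sq_bounded g 1"
      using that assms(3) by (auto simp flip: unit_ballZX_iff)
    moreover have "(\<lambda>k. L2norm (?gap k f g)) \<longlonglongrightarrow> 0"
      using assms(6) that by (simp add: ccorr_def)
    ultimately show ?thesis using tendsto_L2norm_ccorr_gap_iff[OF T S] by blast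
  qed
  have gap_unit: "(\<lambda>k. sq_L2 (?gap k f g)) \<longlonglongrightarrow> 0" if "f \<in> unit_ballZX" "g \<in> unit_ballZX" for f g
    by (rule tendsto_ccorr_gap_unit_ball[OF T S assms(3,4) gap_D that])
  have "(\<lambda>k. L2norm (?gap k f g)) \<longlonglongrightarrow> 0" if "f \<in> L2ZX" "g \<in> L2ZX" for f g
  proof -
    obtain A where f: "cond_sq_bounded f A" using \<open>f \<in> L2ZX\<close> by (rule L2ZX_imp_cond_sq_bounded)
    obtain B where g: "cond_sq_bounded g B" using \<open>g \<in> L2ZX\<close> by (rule L2ZX_imp_cond_sq_bounded)
    show ?thesis
      using tendsto_ccorr_gap_L2ZX[OF T S gap_unit that] tendsto_L2norm_ccorr_gap_iff[OF T S f g]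
      by simp
  qed
  then have "\<forall>f \<in> L2ZX. \<forall>g \<in> L2ZX. (\<lambda>k. L2norm (?gap k f g)) \<longlonglongrightarrow> 0" by blast
  with assms(2,5) show ?thesis unfolding R_ext_def ccorr_def by blast
qed

end
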